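(* Let $q_1,\dots,q_n\in(0,1)$ and let $X_1,\dots,X_n$ be independent with $\Pr(X_i=x)=(1-q_i)^xq_i$ for $x\in\mathbb{Z}_+$. Let $S_n=\sum_{i=1}^nX_i$ and $\lambda=E(S_n)=\sum_{i=1}^n\frac{1-q_i}{q_i}$. Then $K(X_i)=(1-q_i)^2/q_i$ for each $i$, and $$\|P_{S_n}-\mathrm{Po}(\lambda)\|_{\mathrm{TV}}\le\sqrt{\frac{2}{\lambda}\sum_{i=1}^n\frac{(1-q_i)^3}{q_i^2}}.$$ In particular, if $q_i=n/(n+\lambda)$ for all $i$ (for a given $\lambda>0$), then $\|P_{S_n}-\mathrm{Po}(\lambda)\|_{\mathrm{TV}}\le\frac{\sqrt2\,\lambda}{\sqrt{n(n+\lambda)}}\le\sqrt2\,\frac{\lambda}{n}$.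
   Context: $\|P-Q\|_{\mathrm{TV}}=\sum_x|P(x)-Q(x)|$; $\mathrm{Po}(\lambda)$ is the Poisson distribution with mean $\lambda$. For $X$ with distribution $P$ on $\mathbb{Z}_+$ and mean $m>0$, the scaled Fisher information is $K(X)=mE[\rho_X(X)^2]$ where $\rho_X(x)=\frac{(x+1)P(x+1)}{mP(x)}-1$. *)

theory Defs
  imports "HOL-Probability.Probability"
begin

text \<open>Total variation distance (paper's convention, without the factor 1/2)
  between two distributions on the nonnegative integers, given by their
  probability mass functions.\<close>
definition tv_nat :: "(nat \<Rightarrow> real) \<Rightarrow> (nat \<Rightarrow> real) \<Rightarrow> real" where
  "tv_nat P Q = (\<Sum>x. \<bar>P x - Q x\<bar>)"

definition scaled_fisher :: "'a measure \<Rightarrow> ('a \<Rightarrow> nat) \<Rightarrow> real" where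
  "scaled_fisher M Y =
     (let m = (\<integral>\<omega>. real (Y \<omega>) \<partial>M);
          P = (\<lambda>x. measure M {\<omega> \<in> space M. Y \<omega> = x});
          \<rho> = (\<lambda>x. real (x + 1) * P (x + 1) / (m * P x) - 1)
      in m * (\<integral>\<omega>. (\<rho> (Y \<omega>))\<^sup>2 \<partial>M))"

end

theory Submission
  imports Defs
begin

text \<open>
  Write \<open>a\<^sub>k = (k + 1) P(S = k + 1)\<close> and \<open>b\<^sub>k = \<lambda> P(S = k)\<close>. The Poincare inequality
  \<open>Var u(Z) \<le> \<lambda> E (u(Z + 1) - u(Z))\<^sup>2\<close> for \<open>Z ~ Po(\<lambda>)\<close>, applied to \<open>u = sqrt (P\<^sub>S / Po(\<lambda>))\<close>,
  bounds \<open>1 - B\<^sup>2\<close> by \<open>\<Sum>\<^sub>k (sqrt a\<^sub>k - sqrt b\<^sub>k)\<^sup>2\<close>, where \<open>B\<close> is the Bhattacharyya coefficient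
  of \<open>P\<^sub>S\<close> and \<open>Po(\<lambda>)\<close>; by Cauchy-Schwarz the total variation distance is at most
  \<open>2 sqrt (1 - B\<^sup>2)\<close>.

  For independent geometric summands, shifting one coordinate of the joint law gives the Stein
  identity \<open>a\<^sub>k - b\<^sub>k = E[W; S = k]\<close> with \<open>W = \<Sum>\<^sub>i (1 - q\<^sub>i) (X\<^sub>i - E X\<^sub>i)\<close>, hence
  \<open>(a\<^sub>k - b\<^sub>k)\<^sup>2 \<le> P(S = k) E[W\<^sup>2; S = k]\<close>. While \<open>a\<^sub>k \<ge> b\<^sub>k / 4\<close>, which holds when
  \<open>\<Sum>\<^sub>i (1 - q\<^sub>i)\<^sup>2 / q\<^sub>i \<le> 3 \<lambda> / 4\<close>, this yields
  \<open>(sqrt a\<^sub>k - sqrt b\<^sub>k)\<^sup>2 \<le> E[W\<^sup>2; S = k] / (2 \<lambda>)\<close>; summing over \<open>k\<close> gives the bound with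
  \<open>Var W = \<Sum>\<^sub>i (1 - q\<^sub>i)\<^sup>3 / q\<^sub>i\<^sup>2\<close>. In the remaining case \<open>Var W \<ge> 2 \<lambda>\<close>, so the bound
  exceeds the trivial estimate 2.
\<close>

section \<open>Moments of the geometric distribution\<close>

lemma sums_Suc_times_power:
  fixes z :: real
  assumes "\<bar>z\<bar> < 1"
  shows "(\<lambda>a. real (Suc a) * z ^ a) sums (1 / (1 - z)\<^sup>2)"
proof -
  have geom: "(\<lambda>a. 1 * w ^ a) sums (1 / (1 - w))" if "norm w < 1" for w :: real
    using geometric_sums[OF that] by simp
  have "((\<lambda>w::real. 1 / (1 - w)) has_field_derivative (1 / (1 - z)\<^sup>2)) (at z)"
    using assms by (auto intro!: derivative_eq_intros simp: power2_eq_square)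
  then have "(\<lambda>a. diffs (\<lambda>_. 1::real) a * z ^ a) sums (1 / (1 - z)\<^sup>2)"
    by (intro termdiffs_sums_strong[OF geom]) (use assms in auto)
  then show ?thesis
    by (simp add: diffs_def)
qed

lemma sums_Suc_times_Suc_Suc_times_power:
  fixes z :: real
  assumes "\<bar>z\<bar> < 1"
  shows "(\<lambda>a. real (Suc a) * real (Suc (Suc a)) * z ^ a) sums (2 / (1 - z) ^ 3)"
proof -
  have nz: "1 - z \<noteq> 0"
    using assms by auto
  have "((\<lambda>w::real. 1 / (1 - w)\<^sup>2) has_field_derivative (2 * (1 - z) / ((1 - z)\<^sup>2)\<^sup>2)) (at z)"
    using nz by (auto intro!: derivative_eq_intros)
  moreover have "2 * (1 - z) / ((1 - z)\<^sup>2)\<^sup>2 = 2 / (1 - z) ^ 3"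
    using nz by (simp add: divide_simps power2_eq_square power3_eq_cube)
  ultimately have "(\<lambda>a. diffs (\<lambda>a. real (Suc a)) a * z ^ a) sums (2 / (1 - z) ^ 3)"
    by (intro termdiffs_sums_strong[OF sums_Suc_times_power]) (use assms in auto)
  then show ?thesis
    by (simp add: diffs_def mult.commute)
qed

lemma geometric_quadratic_sums:
  fixes q :: real and f :: "nat \<Rightarrow> real"
  assumes q: "0 < q" "q < 1"
    and f: "\<And>a. f a = \<alpha> * (real (Suc a) * real (Suc (Suc a))) + \<beta> * real (Suc a) + \<gamma>"
    and L: "L = q * (2 * \<alpha> / q ^ 3 + \<beta> / q\<^sup>2 + \<gamma> / q)"
  shows "(\<lambda>a. f a * ((1 - q) ^ a * q)) sums L"
proof -
  have r: "\<bar>1 - q\<bar> < 1"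
    using q by auto
  have "(\<lambda>a. q * (\<alpha> * (real (Suc a) * real (Suc (Suc a)) * (1 - q) ^ a)
                 + \<beta> * (real (Suc a) * (1 - q) ^ a) + \<gamma> * (1 - q) ^ a))
     sums (q * (\<alpha> * (2 / q ^ 3) + \<beta> * (1 / q\<^sup>2) + \<gamma> * (1 / q)))"
    using sums_Suc_times_Suc_Suc_times_power[OF r] sums_Suc_times_power[OF r]
      geometric_sums[of "1 - q"] r
    by (intro sums_mult sums_add) auto
  then show ?thesis
    by (simp add: f L algebra_simps)
qed

lemma geometric_sums_1:
  fixes q :: real
  assumes "0 < q" "q < 1"
  shows "(\<lambda>a. (1 - q) ^ a * q) sums 1"
  using geometric_quadratic_sums[OF assms, of "\<lambda>_. 1" 0 0 1 1] assms by simp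

lemma geometric_mean_sums:
  fixes q :: real
  assumes "0 < q" "q < 1"
  shows "(\<lambda>a. real a * ((1 - q) ^ a * q)) sums ((1 - q) / q)"
  by (rule geometric_quadratic_sums[OF assms, of _ 0 1 "-1"])
     (use assms in \<open>auto simp: field_simps power2_eq_square\<close>)

lemma geometric_centred_sums:
  fixes q :: real
  assumes "0 < q" "q < 1"
  shows "(\<lambda>a. (real a - (1 - q) / q) * ((1 - q) ^ a * q)) sums 0"
  by (rule geometric_quadratic_sums[OF assms, of _ 0 1 "-1 - (1 - q) / q"])
     (use assms in \<open>auto simp: field_simps power2_eq_square\<close>)

lemma geometric_variance_sums:
  fixes q :: real
  assumes "0 < q" "q < 1"
  shows "(\<lambda>a. (real a - (1 - q) / q)\<^sup>2 * ((1 - q) ^ a * q)) sums ((1 - q) / q\<^sup>2)"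
  by (rule geometric_quadratic_sums[OF assms, of _ 1 "-3 - 2 * ((1 - q) / q)"
      "1 + 2 * ((1 - q) / q) + ((1 - q) / q)\<^sup>2"])
     (use assms in \<open>auto simp: field_simps power2_eq_square power3_eq_cube\<close>)

lemma geometric_fisher_sums:
  fixes q :: real
  assumes "0 < q" "q < 1"
  shows "(\<lambda>a. (real (Suc a) * q - 1)\<^sup>2 * ((1 - q) ^ a * q)) sums (1 - q)"
  by (rule geometric_quadratic_sums[OF assms, of _ "q\<^sup>2" "- q\<^sup>2 - 2 * q" 1])
     (use assms in \<open>auto simp: field_simps power2_eq_square power3_eq_cube\<close>)

lemma geometric_centred_product_sums:
  fixes q :: real
  assumes q: "0 < q" "q < 1"
  defines "m \<equiv> (1 - q) / q"
  shows "(\<lambda>a. (if A then real a - m else 1) * (if B then real a - m else 1) * ((1 - q) ^ a * q))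
    sums (if A \<and> B then (1 - q) / q\<^sup>2 else if A \<or> B then 0 else 1)"
  using geometric_variance_sums[OF q] geometric_centred_sums[OF q] geometric_sums_1[OF q]
  by (simp add: m_def power2_eq_square)

(* The constants are chosen so that fisher_total > 3 / 4 * total_mean forces
   stein_variance > 2 * total_mean in the locale indep_geometric below. *)
lemma geometric_cube_ratio_ge:
  fixes q :: real
  assumes q: "0 < q" "q < 1"
  shows "15 * ((1 - q) * ((1 - q) / q)) - 9 * ((1 - q) / q) \<le> (1 - q) ^ 3 / q\<^sup>2"
proof -
  have "(1 - q) ^ 3 / q\<^sup>2 - (15 * ((1 - q) * ((1 - q) / q)) - 9 * ((1 - q) / q))
      = (1 - q) * (1 - 4 * q)\<^sup>2 / q\<^sup>2"
    using q by (simp add: field_simps power2_eq_square power3_eq_cube)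
  moreover have "0 \<le> (1 - q) * (1 - 4 * q)\<^sup>2 / q\<^sup>2"
    using q by simp
  ultimately show ?thesis
    by linarith
qed

section \<open>Total variation and the Bhattacharyya coefficient\<close>

lemma tv_nat_le_2:
  fixes P Q :: "nat \<Rightarrow> real"
  assumes "\<And>k. 0 \<le> P k" "\<And>k. 0 \<le> Q k" "P sums 1" "Q sums 1"
  shows "tv_nat P Q \<le> 2"
proof -
  have PQ: "(\<lambda>k. P k + Q k) sums 2"
    using sums_add[OF assms(3,4)] by simp
  have le: "\<bar>P k - Q k\<bar> \<le> P k + Q k" for k
    using assms(1,2)[of k] by linarith
  have "summable (\<lambda>k. \<bar>P k - Q k\<bar>)"
    by (rule summable_comparison_test'[of "\<lambda>k. P k + Q k" 0]) (use PQ le in \<open>auto simp: sums_iff\<close>)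
  then have "(\<Sum>k. \<bar>P k - Q k\<bar>) \<le> (\<Sum>k. P k + Q k)"
    using PQ le by (intro suminf_le) (auto simp: sums_iff)
  then show ?thesis
    using PQ by (simp add: tv_nat_def sums_iff)
qed

lemma sum_abs_diff_sq_le:
  fixes P Q :: "nat \<Rightarrow> real"
  assumes P0: "\<And>k. 0 \<le> P k" and Q0: "\<And>k. 0 \<le> Q k"
  shows "(\<Sum>k\<in>A. \<bar>P k - Q k\<bar>)\<^sup>2
    \<le> ((\<Sum>k\<in>A. P k) + (\<Sum>k\<in>A. Q k))\<^sup>2 - 4 * (\<Sum>k\<in>A. sqrt (P k * Q k))\<^sup>2"
proof -
  define a where "a k = sqrt (P k)" for k
  define b where "b k = sqrt (Q k)" for k
  have ab: "a k * b k = sqrt (P k * Q k)" and a2: "(a k)\<^sup>2 = P k" and b2: "(b k)\<^sup>2 = Q k" for k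
    using P0 Q0 by (simp_all add: a_def b_def real_sqrt_mult)
  have "\<bar>P k - Q k\<bar> = \<bar>a k - b k\<bar> * (a k + b k)" for k
  proof -
    have "P k - Q k = (a k - b k) * (a k + b k)"
      using a2 b2 by (simp add: power2_eq_square algebra_simps)
    moreover have "0 \<le> a k + b k"
      using P0[of k] Q0[of k] by (simp add: a_def b_def)
    ultimately show ?thesis
      by (simp add: abs_mult)
  qed
  then have "(\<Sum>k\<in>A. \<bar>P k - Q k\<bar>)\<^sup>2 = (\<Sum>k\<in>A. \<bar>a k - b k\<bar> * (a k + b k))\<^sup>2"
    by simp
  also have "\<dots> \<le> (\<Sum>k\<in>A. \<bar>a k - b k\<bar>\<^sup>2) * (\<Sum>k\<in>A. (a k + b k)\<^sup>2)"
    by (rule Cauchy_Schwarz_ineq_sum)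
  also have "\<dots> = ((\<Sum>k\<in>A. P k) + (\<Sum>k\<in>A. Q k) - 2 * (\<Sum>k\<in>A. sqrt (P k * Q k)))
                * ((\<Sum>k\<in>A. P k) + (\<Sum>k\<in>A. Q k) + 2 * (\<Sum>k\<in>A. sqrt (P k * Q k)))"
    by (simp add: power2_diff power2_sum a2 b2 ab sum.distrib sum_subtractf sum_distrib_left
        mult.assoc)
  finally show ?thesis
    by (simp add: power2_eq_square algebra_simps)
qed

lemma tv_nat_le_bhattacharyya:
  fixes P Q :: "nat \<Rightarrow> real"
  assumes P0: "\<And>k. 0 \<le> P k" and Q0: "\<And>k. 0 \<le> Q k" and P1: "P sums 1" and Q1: "Q sums 1"
  shows "tv_nat P Q \<le> 2 * sqrt (1 - (\<Sum>k. sqrt (P k * Q k))\<^sup>2)"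
proof -
  define B where "B = (\<Sum>k. sqrt (P k * Q k))"
  have "summable (\<lambda>k. sqrt (P k * Q k))"
  proof (rule summable_comparison_test)
    show "\<exists>N. \<forall>k\<ge>N. norm (sqrt (P k * Q k)) \<le> (P k + Q k) / 2"
      using arith_geo_mean_sqrt P0 Q0 by auto
    show "summable (\<lambda>k. (P k + Q k) / 2)"
      using P1 Q1 by (intro summable_divide summable_add) (auto simp: sums_iff)
  qed
  then have limB: "(\<lambda>N. \<Sum>k\<le>N. sqrt (P k * Q k)) \<longlonglongrightarrow> B"
    unfolding B_def by (rule summable_LIMSEQ')
  have le: "\<bar>P k - Q k\<bar> \<le> P k + Q k" for k
    using P0[of k] Q0[of k] by linarith
  have "summable (\<lambda>k. \<bar>P k - Q k\<bar>)"
    by (rule summable_comparison_test'[of "\<lambda>k. P k + Q k" 0])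
       (use P1 Q1 le in \<open>auto intro: summable_add simp: sums_iff\<close>)
  then have limT: "(\<lambda>N. \<Sum>k\<le>N. \<bar>P k - Q k\<bar>) \<longlonglongrightarrow> tv_nat P Q"
    unfolding tv_nat_def by (rule summable_LIMSEQ')
  have partial: "(\<Sum>k\<le>N. \<bar>P k - Q k\<bar>)
      \<le> sqrt (((\<Sum>k\<le>N. P k) + (\<Sum>k\<le>N. Q k))\<^sup>2 - 4 * (\<Sum>k\<le>N. sqrt (P k * Q k))\<^sup>2)" for N
    using sum_abs_diff_sq_le[OF P0 Q0] by (rule real_le_rsqrt)
  have "(\<lambda>N. sqrt (((\<Sum>k\<le>N. P k) + (\<Sum>k\<le>N. Q k))\<^sup>2 - 4 * (\<Sum>k\<le>N. sqrt (P k * Q k))\<^sup>2))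
      \<longlonglongrightarrow> sqrt ((1 + 1)\<^sup>2 - 4 * B\<^sup>2)"
    using P1 Q1 by (intro tendsto_intros limB) (simp_all add: sums_def_le)
  with limT partial have "tv_nat P Q \<le> sqrt ((1 + 1)\<^sup>2 - 4 * B\<^sup>2)"
    by (intro LIMSEQ_le) auto
  also have "\<dots> = sqrt (2\<^sup>2 * (1 - B\<^sup>2))"
    by (simp add: algebra_simps)
  also have "\<dots> = 2 * sqrt (1 - B\<^sup>2)"
    by (subst real_sqrt_mult) simp
  finally show ?thesis
    unfolding B_def .
qed

section \<open>A Poincare inequality for the Poisson distribution\<close>

lemma sum_weighted_variance_eq_pairs:
  fixes p u :: "nat \<Rightarrow> real"
  shows "(\<Sum>x\<le>N. p x) * (\<Sum>x\<le>N. p x * (u x)\<^sup>2) - (\<Sum>x\<le>N. p x * u x)\<^sup>2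
     = (\<Sum>y\<le>N. \<Sum>x<y. p x * p y * (u y - u x)\<^sup>2)"
proof (induction N)
  case 0
  then show ?case
    by (simp add: power2_eq_square)
next
  case (Suc N)
  define F A B where "F = (\<Sum>x\<le>N. p x)" and "A = (\<Sum>x\<le>N. p x * (u x)\<^sup>2)"
    and "B = (\<Sum>x\<le>N. p x * u x)"
  have new_pairs: "(\<Sum>x<Suc N. p x * p (Suc N) * (u (Suc N) - u x)\<^sup>2)
      = p (Suc N) * (F * (u (Suc N))\<^sup>2 - 2 * u (Suc N) * B + A)"
    unfolding lessThan_Suc_atMost F_def A_def B_def
    by (simp add: power2_eq_square sum_distrib_left sum_distrib_right sum_subtractf sum.distrib
        algebra_simps)
  have "(\<Sum>x\<le>Suc N. p x) * (\<Sum>x\<le>Suc N. p x * (u x)\<^sup>2) - (\<Sum>x\<le>Suc N. p x * u x)\<^sup>2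
      = (F + p (Suc N)) * (A + p (Suc N) * (u (Suc N))\<^sup>2) - (B + p (Suc N) * u (Suc N))\<^sup>2"
    by (simp add: F_def A_def B_def)
  also have "\<dots> = (F * A - B\<^sup>2) + p (Suc N) * (F * (u (Suc N))\<^sup>2 - 2 * u (Suc N) * B + A)"
    by (simp add: power2_eq_square algebra_simps)
  also have "\<dots> = (\<Sum>y\<le>Suc N. \<Sum>x<y. p x * p y * (u y - u x)\<^sup>2)"
    using Suc.IH new_pairs by (simp add: F_def A_def B_def)
  finally show ?case .
qed

lemma sq_diff_le_sum_sq_increments:
  fixes u :: "nat \<Rightarrow> real"
  assumes "x \<le> y"
  shows "(u y - u x)\<^sup>2 \<le> (real y - real x) * (\<Sum>k\<in>{x..<y}. (u (Suc k) - u k)\<^sup>2)"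
proof -
  have "u y - u x = (\<Sum>k\<in>{x..<y}. 1 * (u (Suc k) - u k))"
    using sum_Suc_diff'[OF assms, of u] by simp
  then have "(u y - u x)\<^sup>2 \<le> (\<Sum>k\<in>{x..<y}. 1\<^sup>2) * (\<Sum>k\<in>{x..<y}. (u (Suc k) - u k)\<^sup>2)"
    using Cauchy_Schwarz_ineq_sum[of "\<lambda>_. 1" "\<lambda>k. u (Suc k) - u k" "{x..<y}"] by simp
  then show ?thesis
    using assms by simp
qed

lemma sum_triangle_swap:
  fixes h :: "nat \<Rightarrow> nat \<Rightarrow> real"
  shows "(\<Sum>x\<le>N. \<Sum>k\<in>{x..N}. h x k) = (\<Sum>k\<le>N. \<Sum>x\<le>k. h x k)"
proof (induction N)
  case (Suc N)
  have "(\<Sum>x\<le>N. \<Sum>k\<in>{x..Suc N}. h x k) = (\<Sum>x\<le>N. (\<Sum>k\<in>{x..N}. h x k) + h x (Suc N))"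
    by (rule sum.cong) (auto simp: atLeastAtMostSuc_conv)
  then show ?case
    by (simp add: sum.distrib Suc)
qed simp

(* The weight with which the increment of u at k enters the pair expansion of the variance
   over {..N}, once each squared difference is bounded by Cauchy-Schwarz along x..y. *)
definition gap_weight :: "(nat \<Rightarrow> real) \<Rightarrow> nat \<Rightarrow> nat \<Rightarrow> real" where
  "gap_weight p k N = (\<Sum>x\<le>k. \<Sum>y\<in>{k<..N}. p x * p y * (real y - real x))"

lemma gap_weight_Suc:
  assumes "k \<le> N"
  shows "gap_weight p k (Suc N)
    = gap_weight p k N + (\<Sum>x\<le>k. p x * p (Suc N) * (real (Suc N) - real x))"
proof -
  have "{k<..Suc N} = insert (Suc N) {k<..N}"
    using assms by auto
  then show ?thesis
    by (simp add: gap_weight_def sum.distrib)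
qed

lemma sum_pairs_sum_increments_eq:
  fixes p d :: "nat \<Rightarrow> real"
  shows "(\<Sum>y\<le>N. \<Sum>x<y. p x * p y * (real y - real x) * (\<Sum>k\<in>{x..<y}. d k))
     = (\<Sum>k<N. d k * gap_weight p k N)"
proof (induction N)
  case (Suc N)
  define h where "h x k = p x * p (Suc N) * (real (Suc N) - real x) * d k" for x k
  have "(\<Sum>x<Suc N. p x * p (Suc N) * (real (Suc N) - real x) * (\<Sum>k\<in>{x..<Suc N}. d k))
      = (\<Sum>x\<le>N. \<Sum>k\<in>{x..N}. h x k)"
    unfolding lessThan_Suc_atMost h_def
    by (rule sum.cong) (auto simp: sum_distrib_left atLeastLessThanSuc_atLeastAtMost)
  also have "\<dots> = (\<Sum>k\<le>N. \<Sum>x\<le>k. h x k)"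
    by (rule sum_triangle_swap)
  finally have new_pairs: "(\<Sum>x<Suc N. p x * p (Suc N) * (real (Suc N) - real x)
      * (\<Sum>k\<in>{x..<Suc N}. d k)) = (\<Sum>k\<le>N. \<Sum>x\<le>k. h x k)" .
  have "(\<Sum>k<Suc N. d k * gap_weight p k (Suc N)) = (\<Sum>k\<le>N. d k * gap_weight p k N + (\<Sum>x\<le>k. h x k))"
    unfolding lessThan_Suc_atMost
    by (rule sum.cong) (auto simp: gap_weight_Suc h_def sum_distrib_left algebra_simps)
  moreover have "(\<Sum>k\<le>N. d k * gap_weight p k N) = (\<Sum>k<N. d k * gap_weight p k N)"
    by (simp add: lessThan_Suc_atMost[symmetric] gap_weight_def)
  ultimately show ?case
    using Suc.IH new_pairs by (simp add: sum.distrib)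
qed simp

context
  fixes l :: real
  assumes l_pos: "0 < l"
begin

abbreviation (input) poisson :: "nat \<Rightarrow> real" where
  "poisson \<equiv> pmf (poisson_pmf l)"

lemma poisson_pos: "0 < poisson k"
  using l_pos by simp

lemma poisson_Suc: "poisson (Suc k) * real (Suc k) = l * poisson k"
  using l_pos by (simp add: field_simps del: of_nat_Suc)

lemma poisson_sums: "poisson sums 1"
proof -
  have "(\<lambda>k. l ^ k / fact k) sums exp l"
    using exp_converges[of l] by (simp add: scaleR_conv_of_real divide_inverse mult.commute)
  then have "(\<lambda>k. l ^ k / fact k * exp (- l)) sums (exp l * exp (- l))"
    by (rule sums_mult2)
  moreover have "poisson = (\<lambda>k. l ^ k / fact k * exp (- l))"
    using l_pos by (simp add: fun_eq_iff)
  ultimately show ?thesis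
    by (simp add: exp_minus_inverse)
qed

declare pmf_poisson[simp del]

lemma poisson_partial_sum_le_1: "(\<Sum>k\<le>N. poisson k) \<le> 1"
  using sum_le_suminf[of poisson "{..N}"] poisson_sums poisson_pos
  by (auto simp: sums_iff less_imp_le)

lemma poisson_sum_times_index: "(\<Sum>x\<le>k. real x * poisson x) = l * ((\<Sum>x\<le>k. poisson x) - poisson k)"
proof (induction k)
  case (Suc k)
  then show ?case
    using poisson_Suc[of k] by (simp add: algebra_simps)
qed simp

lemma poisson_gap_weight_eq:
  assumes "k \<le> N"
  shows "gap_weight poisson k N
    = l * (poisson k * (\<Sum>x\<le>N. poisson x) - (\<Sum>x\<le>k. poisson x) * poisson N)"
  using assms
proof (induction N rule: nat_induct_at_least)
  case base
  then show ?case
    by (simp add: gap_weight_def)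
next
  case (Suc N)
  have "(\<Sum>x\<le>k. poisson x * poisson (Suc N) * (real (Suc N) - real x))
      = poisson (Suc N) * real (Suc N) * (\<Sum>x\<le>k. poisson x)
        - poisson (Suc N) * (\<Sum>x\<le>k. real x * poisson x)"
    by (simp add: sum_distrib_left sum_subtractf sum.distrib algebra_simps)
  also have "\<dots> = l * poisson N * (\<Sum>x\<le>k. poisson x)
      - poisson (Suc N) * (l * ((\<Sum>x\<le>k. poisson x) - poisson k))"
    using poisson_Suc[of N] by (simp add: poisson_sum_times_index del: of_nat_Suc)
  finally show ?case
    using gap_weight_Suc[OF Suc.hyps] Suc.IH by (simp add: algebra_simps)
qed

lemma poisson_gap_weight_le:
  assumes "k \<le> N"
  shows "gap_weight poisson k N \<le> l * poisson k"
proof -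
  have "gap_weight poisson k N \<le> l * (poisson k * (\<Sum>x\<le>N. poisson x))"
    unfolding poisson_gap_weight_eq[OF assms] using l_pos poisson_pos
    by (intro mult_left_mono) (auto intro!: mult_nonneg_nonneg sum_nonneg intro: less_imp_le)
  also have "\<dots> \<le> l * poisson k"
    using l_pos poisson_pos[of k] poisson_partial_sum_le_1[of N]
    by (intro mult_left_mono mult_left_le) auto
  finally show ?thesis .
qed

lemma poisson_poincare_partial:
  fixes u :: "nat \<Rightarrow> real"
  shows "(\<Sum>x\<le>N. poisson x) * (\<Sum>x\<le>N. poisson x * (u x)\<^sup>2) - (\<Sum>x\<le>N. poisson x * u x)\<^sup>2
     \<le> (\<Sum>k<N. l * poisson k * (u (Suc k) - u k)\<^sup>2)"
proof -
  have "(\<Sum>x\<le>N. poisson x) * (\<Sum>x\<le>N. poisson x * (u x)\<^sup>2) - (\<Sum>x\<le>N. poisson x * u x)\<^sup>2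
      = (\<Sum>y\<le>N. \<Sum>x<y. poisson x * poisson y * (u y - u x)\<^sup>2)"
    by (rule sum_weighted_variance_eq_pairs)
  also have "\<dots> \<le> (\<Sum>y\<le>N. \<Sum>x<y. poisson x * poisson y
      * ((real y - real x) * (\<Sum>k\<in>{x..<y}. (u (Suc k) - u k)\<^sup>2)))"
    using poisson_pos
    by (intro sum_mono mult_left_mono sq_diff_le_sum_sq_increments) (auto intro: less_imp_le)
  also have "\<dots> = (\<Sum>k<N. (u (Suc k) - u k)\<^sup>2 * gap_weight poisson k N)"
    using sum_pairs_sum_increments_eq[where p = poisson and d = "\<lambda>k. (u (Suc k) - u k)\<^sup>2"]
    by (simp add: mult.assoc)
  also have "\<dots> \<le> (\<Sum>k<N. (u (Suc k) - u k)\<^sup>2 * (l * poisson k))"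
    by (intro sum_mono mult_left_mono poisson_gap_weight_le) auto
  finally show ?thesis
    by (simp add: mult_ac)
qed

lemma poisson_poincare_sqrt_ratio:
  fixes P :: "nat \<Rightarrow> real"
  assumes P0: "\<And>k. 0 \<le> P k"
  shows "(\<Sum>k\<le>N. poisson k) * (\<Sum>k\<le>N. P k) - (\<Sum>k\<le>N. sqrt (P k * poisson k))\<^sup>2
    \<le> (\<Sum>k<N. (sqrt (real (Suc k) * P (Suc k)) - sqrt (l * P k))\<^sup>2)"
proof -
  define u where "u k = sqrt (P k / poisson k)" for k
  have u_sq: "poisson k * (u k)\<^sup>2 = P k" for k
    using poisson_pos[of k] P0[of k] by (simp add: u_def)
  have u_lin: "poisson k * u k = sqrt (P k * poisson k)" for k
  proof -
    have "poisson k * u k = sqrt ((poisson k)\<^sup>2) * sqrt (P k / poisson k)"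
      using poisson_pos[of k] by (simp add: u_def)
    also have "\<dots> = sqrt ((poisson k)\<^sup>2 * (P k / poisson k))"
      by (rule real_sqrt_mult[symmetric])
    also have "(poisson k)\<^sup>2 * (P k / poisson k) = P k * poisson k"
      using poisson_pos[of k] by (simp add: power2_eq_square)
    finally show ?thesis .
  qed
  have u_step: "l * poisson k * (u (Suc k) - u k)\<^sup>2
      = (sqrt (real (Suc k) * P (Suc k)) - sqrt (l * P k))\<^sup>2" for k
  proof -
    have "l * poisson k * (P (Suc k) / poisson (Suc k)) = real (Suc k) * P (Suc k)"
      using poisson_pos[of "Suc k"] by (simp del: of_nat_Suc flip: poisson_Suc)
    then have "sqrt (l * poisson k) * u (Suc k) = sqrt (real (Suc k) * P (Suc k))"
      by (simp add: u_def flip: real_sqrt_mult)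
    moreover have "sqrt (l * poisson k) * u k = sqrt (l * P k)"
      using poisson_pos[of k] by (simp add: u_def flip: real_sqrt_mult)
    moreover have "l * poisson k * (u (Suc k) - u k)\<^sup>2
        = (sqrt (l * poisson k) * u (Suc k) - sqrt (l * poisson k) * u k)\<^sup>2"
      using l_pos poisson_pos[of k]
      by (simp add: power_mult_distrib flip: right_diff_distrib)
    ultimately show ?thesis
      by simp
  qed
  show ?thesis
    using poisson_poincare_partial[of N u] by (simp add: u_sq u_lin u_step)
qed

lemma poisson_bhattacharyya_defect_le:
  fixes P :: "nat \<Rightarrow> real"
  assumes P0: "\<And>k. 0 \<le> P k" and P1: "P sums 1"
    and R: "\<And>N. (\<Sum>k<N. (sqrt (real (Suc k) * P (Suc k)) - sqrt (l * P k))\<^sup>2) \<le> R"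
  shows "1 - (\<Sum>k. sqrt (P k * poisson k))\<^sup>2 \<le> R"
proof -
  have BC: "summable (\<lambda>k. sqrt (P k * poisson k))"
  proof (rule summable_comparison_test)
    show "\<exists>N. \<forall>k\<ge>N. norm (sqrt (P k * poisson k)) \<le> (P k + poisson k) / 2"
      using arith_geo_mean_sqrt P0 poisson_pos by (auto intro: less_imp_le)
    show "summable (\<lambda>k. (P k + poisson k) / 2)"
      using P1 poisson_sums by (intro summable_divide summable_add) (auto simp: sums_iff)
  qed
  have "(\<lambda>N. (\<Sum>k\<le>N. poisson k) * (\<Sum>k\<le>N. P k) - (\<Sum>k\<le>N. sqrt (P k * poisson k))\<^sup>2)
      \<longlonglongrightarrow> 1 * 1 - (\<Sum>k. sqrt (P k * poisson k))\<^sup>2"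
    using poisson_sums P1 summable_LIMSEQ'[OF BC]
    by (intro tendsto_intros) (auto simp: sums_def_le)
  moreover have "(\<Sum>k\<le>N. poisson k) * (\<Sum>k\<le>N. P k) - (\<Sum>k\<le>N. sqrt (P k * poisson k))\<^sup>2 \<le> R" for N
    by (rule order_trans[OF poisson_poincare_sqrt_ratio[of P, OF P0] R])
  ultimately show ?thesis
    by (intro LIMSEQ_le_const2[where a = R]) auto
qed

lemma tv_nat_poisson_le:
  fixes P :: "nat \<Rightarrow> real"
  assumes P0: "\<And>k. 0 \<le> P k" and P1: "P sums 1"
    and R: "\<And>N. (\<Sum>k<N. (sqrt (real (Suc k) * P (Suc k)) - sqrt (l * P k))\<^sup>2) \<le> R"
  shows "tv_nat P poisson \<le> 2 * sqrt R"
proof -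
  have "tv_nat P poisson \<le> 2 * sqrt (1 - (\<Sum>k. sqrt (P k * poisson k))\<^sup>2)"
    using poisson_pos by (intro tv_nat_le_bhattacharyya P0 P1 poisson_sums less_imp_le)
  also have "\<dots> \<le> 2 * sqrt R"
    using poisson_bhattacharyya_defect_le[OF P0 P1 R] by simp
  finally show ?thesis .
qed

end

section \<open>Sums of independent geometric variables\<close>

lemma sum_fun_upd:
  assumes "finite A" "i \<in> A"
  shows "sum (x(i := v)) A = v + sum x (A - {i})"
  using assms by (subst sum.remove[of _ i]) (auto intro!: sum.cong)

lemma sqrt_diff_sq_le:
  fixes a b :: real
  assumes b: "0 < b" and ab: "b / 4 \<le> a"
  shows "(sqrt a - sqrt b)\<^sup>2 \<le> (a - b)\<^sup>2 / (2 * b)"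
proof -
  define s t where "s = sqrt a" and "t = sqrt b"
  have t: "0 < t" "t\<^sup>2 = b" and s: "s\<^sup>2 = a"
    using b ab by (simp_all add: s_def t_def)
  have "t / 2 \<le> s"
    using real_sqrt_le_mono[OF ab] by (simp add: s_def t_def real_sqrt_divide)
  then have "(3 * t / 2)\<^sup>2 \<le> (s + t)\<^sup>2"
    using t by (intro power_mono) auto
  moreover have "2 * t\<^sup>2 \<le> (3 * t / 2)\<^sup>2"
    by (simp add: power2_eq_square)
  ultimately have "2 * t\<^sup>2 \<le> (s + t)\<^sup>2"
    by linarith
  then have "(s - t)\<^sup>2 * (2 * t\<^sup>2) \<le> (s - t)\<^sup>2 * (s + t)\<^sup>2"
    by (intro mult_left_mono) auto
  also have "\<dots> = (a - b)\<^sup>2"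
    using s t by (simp add: power_mult_distrib[symmetric] algebra_simps power2_eq_square)
  finally show ?thesis
    using b t unfolding s_def t_def by (simp add: field_simps)
qed

lemma mult_div_sqrt_mult_add_le:
  fixes a c N :: real
  assumes "0 \<le> a" "0 < c" "0 < N"
  shows "a * c / sqrt (N * (N + c)) \<le> a * (c / N)"
proof -
  have "N \<le> sqrt (N * (N + c))"
    using assms by (intro real_le_rsqrt) (simp add: power2_eq_square mult_left_mono)
  then have "c / sqrt (N * (N + c)) \<le> c / N"
    using assms by (intro divide_left_mono) auto
  from mult_left_mono[OF this assms(1)] show ?thesis
    by simp
qed

locale indep_geometric = prob_space M
  for M :: "'a measure" and X :: "nat \<Rightarrow> 'a \<Rightarrow> nat" and q :: "nat \<Rightarrow> real" and n :: nat +
  assumes n_pos: "1 \<le> n"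
    and q_bounds: "i \<in> {1..n} \<Longrightarrow> 0 < q i \<and> q i < 1"
    and indep: "indep_vars (\<lambda>_. count_space UNIV) X {1..n}"
    and geometric: "i \<in> {1..n} \<Longrightarrow> prob {\<omega> \<in> space M. X i \<omega> = x} = (1 - q i) ^ x * q i"
begin

definition joint_pmf :: "(nat \<Rightarrow> nat) \<Rightarrow> real" where
  "joint_pmf x = (\<Prod>i\<in>{1..n}. (1 - q i) ^ x i * q i)"

definition compositions :: "nat \<Rightarrow> (nat \<Rightarrow> nat) set" where
  "compositions k = {x \<in> {1..n} \<rightarrow>\<^sub>E UNIV. sum x {1..n} = k}"

definition vector_event :: "(nat \<Rightarrow> nat) \<Rightarrow> 'a set" where
  "vector_event x = {\<omega> \<in> space M. \<forall>i\<in>{1..n}. X i \<omega> = x i}"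

definition law_sum :: "nat \<Rightarrow> real" where
  "law_sum k = prob {\<omega> \<in> space M. (\<Sum>i\<in>{1..n}. X i \<omega>) = k}"

lemma X_measurable: "i \<in> {1..n} \<Longrightarrow> X i \<in> M \<rightarrow>\<^sub>M count_space UNIV"
  using indep unfolding indep_vars_def by auto

lemma joint_pmf_pos: "0 < joint_pmf x"
  unfolding joint_pmf_def using q_bounds by (intro prod_pos) auto

lemma joint_pmf_incr:
  assumes i: "i \<in> {1..n}"
  shows "joint_pmf (x(i := x i + 1)) = (1 - q i) * joint_pmf x"
proof -
  have "joint_pmf (x(i := x i + 1))
      = (1 - q i) ^ (x i + 1) * q i * (\<Prod>j\<in>{1..n} - {i}. (1 - q j) ^ x j * q j)"
    unfolding joint_pmf_def using i by (subst prod.remove[of _ i]) (auto intro!: prod.cong)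
  also have "\<dots> = (1 - q i) * joint_pmf x"
    unfolding joint_pmf_def using i by (subst (2) prod.remove[of _ i]) auto
  finally show ?thesis .
qed

lemma compositions_subset: "compositions k \<subseteq> {1..n} \<rightarrow>\<^sub>E {..k}"
proof
  fix x
  assume x: "x \<in> compositions k"
  then have "x i \<le> k" if "i \<in> {1..n}" for i
    unfolding compositions_def using that member_le_sum[of i "{1..n}" x] by fastforce
  with x show "x \<in> {1..n} \<rightarrow>\<^sub>E {..k}"
    unfolding compositions_def by (auto simp: PiE_def Pi_def)
qed

lemma finite_compositions: "finite (compositions k)"
  using compositions_subset by (rule finite_subset) (simp add: finite_PiE)

lemma compositions_nonempty: "compositions k \<noteq> {}"
proof -
  define x where "x = (\<lambda>i\<in>{1..n}. if i = 1 then k else 0)"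
  have "sum x {1..n} = (\<Sum>i\<in>{1..n}. if i = 1 then k else 0)"
    unfolding x_def by (rule sum.cong) auto
  also have "\<dots> = k"
    using n_pos by simp
  finally have "x \<in> compositions k"
    unfolding compositions_def x_def by auto
  then show ?thesis
    by blast
qed

lemma vector_event_eq_INT:
  "vector_event x = (\<Inter>i\<in>{1..n}. X i -` {x i} \<inter> space M)"
  using n_pos by (auto simp: vector_event_def)

lemma vector_event_sets: "vector_event x \<in> sets M"
  unfolding vector_event_eq_INT using n_pos
  by (intro sets.finite_INT) (auto intro: measurable_sets[OF X_measurable])

lemma prob_vector_event: "prob (vector_event x) = joint_pmf x"
proof -
  have "prob (vector_event x) = (\<Prod>i\<in>{1..n}. prob (X i -` {x i} \<inter> space M))"
    unfolding vector_event_eq_INT using n_pos by (intro indep_varsD[OF indep]) auto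
  also have "\<dots> = joint_pmf x"
    unfolding joint_pmf_def
  proof (rule prod.cong)
    fix i
    assume "i \<in> {1..n}"
    moreover have "X i -` {x i} \<inter> space M = {\<omega> \<in> space M. X i \<omega> = x i}"
      by auto
    ultimately show "prob (X i -` {x i} \<inter> space M) = (1 - q i) ^ x i * q i"
      by (simp add: geometric)
  qed simp
  finally show ?thesis .
qed

lemma sum_event_eq:
  "{\<omega> \<in> space M. (\<Sum>i\<in>{1..n}. X i \<omega>) = k} = (\<Union>x\<in>compositions k. vector_event x)"
proof (intro equalityI subsetI)
  fix \<omega>
  assume \<omega>: "\<omega> \<in> {\<omega> \<in> space M. (\<Sum>i\<in>{1..n}. X i \<omega>) = k}"
  define x where "x = (\<lambda>i\<in>{1..n}. X i \<omega>)"
  have "x \<in> compositions k" and "\<omega> \<in> vector_event x"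
    using \<omega> unfolding compositions_def vector_event_def x_def by auto
  then show "\<omega> \<in> (\<Union>x\<in>compositions k. vector_event x)"
    by blast
next
  fix \<omega>
  assume "\<omega> \<in> (\<Union>x\<in>compositions k. vector_event x)"
  then obtain x where x: "x \<in> compositions k" "\<omega> \<in> vector_event x"
    by blast
  then have "(\<Sum>i\<in>{1..n}. X i \<omega>) = sum x {1..n}"
    unfolding vector_event_def by (auto intro!: sum.cong)
  then show "\<omega> \<in> {\<omega> \<in> space M. (\<Sum>i\<in>{1..n}. X i \<omega>) = k}"
    using x unfolding vector_event_def compositions_def by auto
qed

lemma law_sum_eq: "law_sum k = (\<Sum>x\<in>compositions k. joint_pmf x)"
proof -
  have "disjoint_family_on vector_event (compositions k)"
    unfolding disjoint_family_on_def
  proof (intro ballI impI)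
    fix x y
    assume "x \<in> compositions k" "y \<in> compositions k" "x \<noteq> y"
    then obtain i where "i \<in> {1..n}" "x i \<noteq> y i"
      unfolding compositions_def by (metis (mono_tags, lifting) PiE_ext mem_Collect_eq)
    then show "vector_event x \<inter> vector_event y = {}"
      unfolding vector_event_def by auto
  qed
  then have "law_sum k = (\<Sum>x\<in>compositions k. prob (vector_event x))"
    unfolding law_sum_def sum_event_eq
    by (intro finite_measure_finite_Union finite_compositions) (auto intro: vector_event_sets)
  then show ?thesis
    by (simp add: prob_vector_event)
qed

lemma law_sum_pos: "0 < law_sum k"
  unfolding law_sum_eq
  using finite_compositions compositions_nonempty joint_pmf_pos by (intro sum_pos) auto

lemma law_sum_sums: "law_sum sums 1"
proof -
  define A where "A k = {\<omega> \<in> space M. (\<Sum>i\<in>{1..n}. X i \<omega>) = k}" for k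
  have "range A \<subseteq> sets M"
    unfolding A_def sum_event_eq using finite_compositions vector_event_sets by auto
  moreover have "disjoint_family A"
    unfolding disjoint_family_on_def A_def by auto
  moreover have "(\<Union>k. A k) = space M"
    unfolding A_def by auto
  ultimately have "(\<lambda>k. prob (A k)) sums 1"
    using finite_measure_UNION[of A] by (simp add: prob_space)
  then show ?thesis
    by (simp add: A_def law_sum_def[abs_def])
qed

lemma distr_X_geometric:
  assumes i: "i \<in> {1..n}"
  shows "distr M (count_space UNIV) (X i) = measure_pmf (geometric_pmf (q i))"
proof (rule measure_eqI_countable[where A = UNIV])
  fix a :: nat
  have "X i -` {a} \<inter> space M = {\<omega> \<in> space M. X i \<omega> = a}"
    by auto
  then have "emeasure (distr M (count_space UNIV) (X i)) {a} = ennreal ((1 - q i) ^ a * q i)"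
    using i by (simp add: emeasure_distr[OF X_measurable] emeasure_eq_measure geometric)
  also have "\<dots> = emeasure (measure_pmf (geometric_pmf (q i))) {a}"
    using q_bounds[OF i] by (simp add: emeasure_pmf_single)
  finally show "emeasure (distr M (count_space UNIV) (X i)) {a}
      = emeasure (measure_pmf (geometric_pmf (q i))) {a}" .
qed simp_all

lemma integral_X_eq:
  assumes i: "i \<in> {1..n}" and f: "\<And>a. 0 \<le> f a"
    and sums: "(\<lambda>a. f a * ((1 - q i) ^ a * q i)) sums s"
  shows "(\<integral>\<omega>. f (X i \<omega>) \<partial>M) = s"
proof -
  have q: "0 < q i" "q i \<le> 1"
    using q_bounds[OF i] by auto
  have "(\<integral>\<omega>. f (X i \<omega>) \<partial>M) = integral\<^sup>L (density (count_space UNIV) (pmf (geometric_pmf (q i)))) f"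
    by (simp add: integral_distr[OF X_measurable[OF i], symmetric] distr_X_geometric[OF i]
        measure_pmf_eq_density)
  also have "\<dots> = (\<integral>a. f a * ((1 - q i) ^ a * q i) \<partial>count_space UNIV)"
    using q by (subst integral_density) (auto simp: mult.commute)
  also have "\<dots> = s"
  proof -
    have "integrable (count_space UNIV) (\<lambda>a. f a * ((1 - q i) ^ a * q i))"
      using sums f q by (simp add: integrable_count_space_nat_iff sums_iff)
    then show ?thesis
      using sums by (simp add: integral_count_space_nat sums_iff)
  qed
  finally show ?thesis .
qed

lemma scaled_fisher_X:
  assumes i: "i \<in> {1..n}"
  shows "scaled_fisher M (X i) = (1 - q i)\<^sup>2 / q i"
proof -
  have q: "0 < q i" "q i < 1"
    using q_bounds[OF i] by auto
  have mean: "(\<integral>\<omega>. real (X i \<omega>) \<partial>M) = (1 - q i) / q i"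
    using geometric_mean_sums[OF q] by (intro integral_X_eq[OF i]) auto
  have score: "real (x + 1) * prob {\<omega> \<in> space M. X i \<omega> = x + 1}
      / ((1 - q i) / q i * prob {\<omega> \<in> space M. X i \<omega> = x}) - 1 = real (Suc x) * q i - 1" for x
    using i q by (simp add: geometric)
  have "(\<integral>\<omega>. (real (Suc (X i \<omega>)) * q i - 1)\<^sup>2 \<partial>M) = 1 - q i"
    using geometric_fisher_sums[OF q] by (intro integral_X_eq[OF i]) auto
  then show ?thesis
    unfolding scaled_fisher_def Let_def mean score by (simp add: power2_eq_square)
qed

definition mean :: "nat \<Rightarrow> real" where
  "mean i = (1 - q i) / q i"

definition total_mean :: real where
  "total_mean = (\<Sum>i\<in>{1..n}. mean i)"

definition stein_weight :: "(nat \<Rightarrow> nat) \<Rightarrow> real" where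
  "stein_weight x = (\<Sum>i\<in>{1..n}. (1 - q i) * (real (x i) - mean i))"

definition fisher_total :: real where
  "fisher_total = (\<Sum>i\<in>{1..n}. (1 - q i) * mean i)"

definition stein_variance :: real where
  "stein_variance = (\<Sum>i\<in>{1..n}. (1 - q i) ^ 3 / (q i)\<^sup>2)"

lemma total_mean_pos: "0 < total_mean"
  unfolding total_mean_def mean_def using n_pos q_bounds by (intro sum_pos) auto

lemma compositions_incr_image:
  assumes i: "i \<in> {1..n}"
  shows "(\<lambda>x. x(i := x i + 1)) ` compositions k = {y \<in> compositions (Suc k). y i \<noteq> 0}"
proof (intro equalityI subsetI)
  fix y
  assume "y \<in> (\<lambda>x. x(i := x i + 1)) ` compositions k"
  then obtain x where "x \<in> compositions k" "y = x(i := x i + 1)"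
    by blast
  then show "y \<in> {y \<in> compositions (Suc k). y i \<noteq> 0}"
    using i sum_fun_upd[of "{1..n}" i x] sum.remove[of "{1..n}" i x]
    unfolding compositions_def by (auto simp: PiE_def extensional_def)
next
  fix y
  assume y: "y \<in> {y \<in> compositions (Suc k). y i \<noteq> 0}"
  define x where "x = y(i := y i - 1)"
  have "x \<in> compositions k"
    using y i sum_fun_upd[of "{1..n}" i y] sum.remove[of "{1..n}" i y]
    unfolding x_def compositions_def by (auto simp: PiE_def extensional_def)
  moreover have "y = x(i := x i + 1)"
    using y unfolding x_def by auto
  ultimately show "y \<in> (\<lambda>x. x(i := x i + 1)) ` compositions k"
    by blast
qed

lemma sum_coordinate_compositions_Suc:
  assumes i: "i \<in> {1..n}"
  shows "(\<Sum>y\<in>compositions (Suc k). real (y i) * joint_pmf y)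
    = (1 - q i) * (\<Sum>x\<in>compositions k. real (x i + 1) * joint_pmf x)"
proof -
  define g where "g x = x(i := x i + 1)" for x :: "nat \<Rightarrow> nat"
  have "inj g"
    by (rule injI) (metis g_def fun_upd_same fun_upd_triv fun_upd_upd add_right_cancel)
  have "(1 - q i) * (\<Sum>x\<in>compositions k. real (x i + 1) * joint_pmf x)
      = (\<Sum>x\<in>compositions k. real (g x i) * joint_pmf (g x))"
    unfolding g_def joint_pmf_incr[OF i] by (simp add: sum_distrib_left mult_ac)
  also have "\<dots> = (\<Sum>y\<in>g ` compositions k. real (y i) * joint_pmf y)"
    using \<open>inj g\<close> by (simp add: sum.reindex inj_on_subset[OF \<open>inj g\<close>])
  also have "\<dots> = (\<Sum>y\<in>compositions (Suc k). real (y i) * joint_pmf y)"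
    unfolding g_def compositions_incr_image[OF i]
    by (rule sum.mono_neutral_left) (auto simp: finite_compositions)
  finally show ?thesis
    by (rule sym)
qed

lemma stein_identity:
  "real (Suc k) * law_sum (Suc k) - total_mean * law_sum k
     = (\<Sum>x\<in>compositions k. stein_weight x * joint_pmf x)"
proof -
  define shifted where "shifted x = (\<Sum>i\<in>{1..n}. (1 - q i) * real (x i + 1))" for x :: "nat \<Rightarrow> nat"
  have "real (Suc k) * law_sum (Suc k)
      = (\<Sum>y\<in>compositions (Suc k). real (sum y {1..n}) * joint_pmf y)"
    unfolding law_sum_eq sum_distrib_left by (rule sum.cong) (auto simp: compositions_def)
  also have "\<dots> = (\<Sum>i\<in>{1..n}. \<Sum>y\<in>compositions (Suc k). real (y i) * joint_pmf y)"
    by (simp add: sum_distrib_right sum.swap[of _ "compositions (Suc k)"])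
  also have "\<dots> = (\<Sum>i\<in>{1..n}. (1 - q i) * (\<Sum>x\<in>compositions k. real (x i + 1) * joint_pmf x))"
    by (rule sum.cong) (auto simp: sum_coordinate_compositions_Suc)
  also have "\<dots> = (\<Sum>x\<in>compositions k. shifted x * joint_pmf x)"
    by (simp add: shifted_def sum_distrib_left sum_distrib_right sum.swap[of _ "compositions k"]
        mult_ac)
  finally have Suc_k: "real (Suc k) * law_sum (Suc k) = (\<Sum>x\<in>compositions k. shifted x * joint_pmf x)" .
  have weight: "shifted x - total_mean = stein_weight x" for x
  proof -
    have "(1 - q i) * real (x i + 1) - mean i = (1 - q i) * (real (x i) - mean i)"
      if "i \<in> {1..n}" for i
      using q_bounds[OF that] by (simp add: mean_def field_simps)
    then show ?thesis
      unfolding shifted_def total_mean_def stein_weight_def by (simp add: sum_subtractf[symmetric])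
  qed
  have "real (Suc k) * law_sum (Suc k) - total_mean * law_sum k
      = (\<Sum>x\<in>compositions k. shifted x * joint_pmf x) - (\<Sum>x\<in>compositions k. total_mean * joint_pmf x)"
    by (simp only: Suc_k law_sum_eq[of k] sum_distrib_left)
  also have "\<dots> = (\<Sum>x\<in>compositions k. (shifted x - total_mean) * joint_pmf x)"
    by (simp only: sum_subtractf[symmetric] left_diff_distrib)
  finally show ?thesis
    by (simp only: weight)
qed

lemma stein_weight_ge: "- fisher_total \<le> stein_weight x"
  unfolding fisher_total_def stein_weight_def sum_negf[symmetric]
proof (rule sum_mono)
  fix i
  assume "i \<in> {1..n}"
  then have "0 \<le> (1 - q i) * real (x i)"
    using q_bounds[of i] by simp
  then show "- ((1 - q i) * mean i) \<le> (1 - q i) * (real (x i) - mean i)"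
    by (simp add: algebra_simps)
qed

lemma law_sum_Suc_ge: "(total_mean - fisher_total) * law_sum k \<le> real (Suc k) * law_sum (Suc k)"
proof -
  have "- fisher_total * law_sum k = (\<Sum>x\<in>compositions k. - fisher_total * joint_pmf x)"
    by (simp add: law_sum_eq sum_distrib_left)
  also have "\<dots> \<le> (\<Sum>x\<in>compositions k. stein_weight x * joint_pmf x)"
    using stein_weight_ge joint_pmf_pos by (intro sum_mono mult_right_mono) (auto intro: less_imp_le)
  also have "\<dots> = real (Suc k) * law_sum (Suc k) - total_mean * law_sum k"
    by (rule stein_identity[symmetric])
  finally show ?thesis
    by (simp add: algebra_simps)
qed

lemma stein_identity_sq_le:
  "(real (Suc k) * law_sum (Suc k) - total_mean * law_sum k)\<^sup>2
     \<le> law_sum k * (\<Sum>x\<in>compositions k. (stein_weight x)\<^sup>2 * joint_pmf x)"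
proof -
  have "(\<Sum>x\<in>compositions k. stein_weight x * joint_pmf x)
      = (\<Sum>x\<in>compositions k. sqrt (joint_pmf x) * (stein_weight x * sqrt (joint_pmf x)))"
    using joint_pmf_pos by (intro sum.cong) (auto simp: less_imp_le mult_ac)
  also have "\<dots>\<^sup>2 \<le> (\<Sum>x\<in>compositions k. (sqrt (joint_pmf x))\<^sup>2)
      * (\<Sum>x\<in>compositions k. (stein_weight x * sqrt (joint_pmf x))\<^sup>2)"
    by (rule Cauchy_Schwarz_ineq_sum)
  also have "\<dots> = law_sum k * (\<Sum>x\<in>compositions k. (stein_weight x)\<^sup>2 * joint_pmf x)"
    using joint_pmf_pos by (simp add: law_sum_eq power_mult_distrib less_imp_le)
  finally show ?thesis
    by (simp only: stein_identity)
qed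

definition cube :: "nat \<Rightarrow> (nat \<Rightarrow> nat) set" where
  "cube N = {1..n} \<rightarrow>\<^sub>E {..<N}"

lemma cube_product_tendsto:
  assumes "\<And>l. l \<in> {1..n} \<Longrightarrow> (\<lambda>a. g l a * ((1 - q l) ^ a * q l)) sums s l"
  shows "(\<lambda>N. \<Sum>x\<in>cube N. (\<Prod>l\<in>{1..n}. g l (x l)) * joint_pmf x) \<longlonglongrightarrow> (\<Prod>l\<in>{1..n}. s l)"
proof -
  have "(\<Sum>x\<in>cube N. (\<Prod>l\<in>{1..n}. g l (x l)) * joint_pmf x)
      = (\<Prod>l\<in>{1..n}. \<Sum>a<N. g l a * ((1 - q l) ^ a * q l))" for N
    unfolding cube_def joint_pmf_def by (subst prod_sum_PiE) (simp_all add: prod.distrib)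
  moreover have "(\<lambda>N. \<Prod>l\<in>{1..n}. \<Sum>a<N. g l a * ((1 - q l) ^ a * q l)) \<longlonglongrightarrow> (\<Prod>l\<in>{1..n}. s l)"
    using assms by (intro tendsto_prod) (simp add: sums_def)
  ultimately show ?thesis
    by simp
qed

lemma cube_centred_moment_tendsto:
  assumes i: "i \<in> {1..n}" and j: "j \<in> {1..n}"
  shows "(\<lambda>N. \<Sum>x\<in>cube N. (real (x i) - mean i) * (real (x j) - mean j) * joint_pmf x)
    \<longlonglongrightarrow> (if i = j then (1 - q i) / (q i)\<^sup>2 else 0)"
proof -
  define g where
    "g l a = (if l = i then real a - mean l else 1) * (if l = j then real a - mean l else 1)" for l a
  define s where
    "s l = (if l = i \<and> l = j then (1 - q l) / (q l)\<^sup>2 else if l = i \<or> l = j then 0 else 1)" for l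
  have "(\<lambda>N. \<Sum>x\<in>cube N. (\<Prod>l\<in>{1..n}. g l (x l)) * joint_pmf x) \<longlonglongrightarrow> (\<Prod>l\<in>{1..n}. s l)"
    unfolding g_def s_def mean_def using q_bounds
    by (intro cube_product_tendsto geometric_centred_product_sums) auto
  moreover have "(\<Prod>l\<in>{1..n}. g l (x l)) = (real (x i) - mean i) * (real (x j) - mean j)" for x
    using i j by (simp add: g_def prod.distrib)
  moreover have "(\<Prod>l\<in>{1..n}. s l) = (if i = j then (1 - q i) / (q i)\<^sup>2 else 0)"
  proof (cases "i = j")
    case True
    then have "(\<Prod>l\<in>{1..n}. s l) = (\<Prod>l\<in>{1..n}. if l = i then (1 - q l) / (q l)\<^sup>2 else 1)"
      by (intro prod.cong) (auto simp: s_def)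
    then show ?thesis
      using True i by simp
  next
    case False
    then have "s i = 0"
      by (simp add: s_def)
    then show ?thesis
      using False i by (auto simp: prod_zero_iff)
  qed
  ultimately show ?thesis
    by simp
qed

lemma cube_stein_moment_tendsto:
  "(\<lambda>N. \<Sum>x\<in>cube N. (stein_weight x)\<^sup>2 * joint_pmf x) \<longlonglongrightarrow> stein_variance"
proof -
  define c where
    "c N i j = (\<Sum>x\<in>cube N. (real (x i) - mean i) * (real (x j) - mean j) * joint_pmf x)" for N i j
  have expand: "(\<Sum>x\<in>cube N. (stein_weight x)\<^sup>2 * joint_pmf x)
      = (\<Sum>i\<in>{1..n}. \<Sum>j\<in>{1..n}. (1 - q i) * (1 - q j) * c N i j)" for N
    unfolding c_def stein_weight_def power2_eq_square sum_product sum_distrib_left sum_distrib_right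
    by (subst sum.swap) (simp add: sum.swap[of _ "cube N"] mult_ac)
  have "(\<lambda>N. \<Sum>i\<in>{1..n}. \<Sum>j\<in>{1..n}. (1 - q i) * (1 - q j) * c N i j)
      \<longlonglongrightarrow> (\<Sum>i\<in>{1..n}. \<Sum>j\<in>{1..n}. (1 - q i) * (1 - q j) * (if i = j then (1 - q i) / (q i)\<^sup>2 else 0))"
    unfolding c_def by (intro tendsto_sum tendsto_mult_left cube_centred_moment_tendsto) auto
  also have "(\<Sum>i\<in>{1..n}. \<Sum>j\<in>{1..n}. (1 - q i) * (1 - q j) * (if i = j then (1 - q i) / (q i)\<^sup>2 else 0))
      = stein_variance"
    unfolding stein_variance_def by (simp add: if_distrib power3_eq_cube cong: if_cong)
  finally show ?thesis
    by (simp only: expand)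
qed

lemma partial_stein_moment_le:
  "(\<Sum>k<N. \<Sum>x\<in>compositions k. (stein_weight x)\<^sup>2 * joint_pmf x) \<le> stein_variance"
proof -
  have nonneg: "0 \<le> (stein_weight x)\<^sup>2 * joint_pmf x" for x
    using joint_pmf_pos[of x] by simp
  have disjoint: "compositions k \<inter> compositions k' = {}" if "k \<noteq> k'" for k k'
    using that by (auto simp: compositions_def)
  have "(\<Sum>k<N. \<Sum>x\<in>compositions k. (stein_weight x)\<^sup>2 * joint_pmf x)
      = (\<Sum>x\<in>(\<Union>k<N. compositions k). (stein_weight x)\<^sup>2 * joint_pmf x)"
    by (rule sum.UNION_disjoint[symmetric]) (auto simp: finite_compositions disjoint)
  also have "\<dots> \<le> (\<Sum>x\<in>cube N. (stein_weight x)\<^sup>2 * joint_pmf x)"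
  proof (rule sum_mono2)
    show "(\<Union>k<N. compositions k) \<subseteq> cube N"
    proof
      fix x
      assume "x \<in> (\<Union>k<N. compositions k)"
      then obtain k where "k < N" "x \<in> {1..n} \<rightarrow>\<^sub>E {..k}"
        using compositions_subset by blast
      then show "x \<in> cube N"
        unfolding cube_def by (auto simp: PiE_def Pi_def)
    qed
  qed (auto simp: cube_def finite_PiE nonneg)
  also have "\<dots> \<le> stein_variance"
  proof (rule incseq_le[OF _ cube_stein_moment_tendsto])
    show "incseq (\<lambda>N. \<Sum>x\<in>cube N. (stein_weight x)\<^sup>2 * joint_pmf x)"
    proof (rule incseq_SucI)
      fix N
      have "cube N \<subseteq> cube (Suc N)"
        unfolding cube_def by (auto simp: PiE_def Pi_def)
      then show "(\<Sum>x\<in>cube N. (stein_weight x)\<^sup>2 * joint_pmf x)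
          \<le> (\<Sum>x\<in>cube (Suc N). (stein_weight x)\<^sup>2 * joint_pmf x)"
        by (intro sum_mono2) (auto simp: cube_def finite_PiE nonneg)
    qed
  qed
  finally show ?thesis .
qed

lemma sqrt_stein_increment_le:
  assumes small: "fisher_total \<le> 3 / 4 * total_mean"
  shows "(sqrt (real (Suc k) * law_sum (Suc k)) - sqrt (total_mean * law_sum k))\<^sup>2
    \<le> (\<Sum>x\<in>compositions k. (stein_weight x)\<^sup>2 * joint_pmf x) / (2 * total_mean)"
proof -
  have pos: "0 < total_mean * law_sum k"
    using total_mean_pos law_sum_pos by simp
  have "total_mean * law_sum k / 4 \<le> (total_mean - fisher_total) * law_sum k"
    using small law_sum_pos[of k] by (simp add: field_simps)
  also have "\<dots> \<le> real (Suc k) * law_sum (Suc k)"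
    by (rule law_sum_Suc_ge)
  finally have "(sqrt (real (Suc k) * law_sum (Suc k)) - sqrt (total_mean * law_sum k))\<^sup>2
      \<le> (real (Suc k) * law_sum (Suc k) - total_mean * law_sum k)\<^sup>2 / (2 * (total_mean * law_sum k))"
    by (rule sqrt_diff_sq_le[OF pos])
  also have "\<dots> \<le> law_sum k * (\<Sum>x\<in>compositions k. (stein_weight x)\<^sup>2 * joint_pmf x)
      / (2 * (total_mean * law_sum k))"
    using pos by (intro divide_right_mono stein_identity_sq_le) auto
  also have "\<dots> = (\<Sum>x\<in>compositions k. (stein_weight x)\<^sup>2 * joint_pmf x) / (2 * total_mean)"
    using law_sum_pos[of k] by (simp add: field_simps)
  finally show ?thesis .
qed

lemma stein_variance_ge: "15 * fisher_total - 9 * total_mean \<le> stein_variance"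
proof -
  have "15 * fisher_total - 9 * total_mean
      = (\<Sum>i\<in>{1..n}. 15 * ((1 - q i) * ((1 - q i) / q i)) - 9 * ((1 - q i) / q i))"
    by (simp add: fisher_total_def total_mean_def mean_def sum_subtractf sum_distrib_left)
  also have "\<dots> \<le> stein_variance"
    unfolding stein_variance_def using q_bounds by (intro sum_mono geometric_cube_ratio_ge) auto
  finally show ?thesis .
qed

lemma tv_law_sum_poisson_le:
  "tv_nat law_sum (pmf (poisson_pmf total_mean)) \<le> sqrt (2 / total_mean * stein_variance)"
proof (cases "fisher_total \<le> 3 / 4 * total_mean")
  case True
  have R: "(\<Sum>k<N. (sqrt (real (Suc k) * law_sum (Suc k)) - sqrt (total_mean * law_sum k))\<^sup>2)
      \<le> stein_variance / (2 * total_mean)" for N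
  proof -
    have "(\<Sum>k<N. (sqrt (real (Suc k) * law_sum (Suc k)) - sqrt (total_mean * law_sum k))\<^sup>2)
        \<le> (\<Sum>k<N. (\<Sum>x\<in>compositions k. (stein_weight x)\<^sup>2 * joint_pmf x) / (2 * total_mean))"
      by (intro sum_mono sqrt_stein_increment_le True)
    also have "\<dots> = (\<Sum>k<N. \<Sum>x\<in>compositions k. (stein_weight x)\<^sup>2 * joint_pmf x) / (2 * total_mean)"
      by (rule sum_divide_distrib[symmetric])
    also have "\<dots> \<le> stein_variance / (2 * total_mean)"
      using total_mean_pos by (intro divide_right_mono partial_stein_moment_le) auto
    finally show ?thesis .
  qed
  have "tv_nat law_sum (pmf (poisson_pmf total_mean)) \<le> 2 * sqrt (stein_variance / (2 * total_mean))"
    by (rule tv_nat_poisson_le[OF total_mean_pos _ law_sum_sums R]) (simp add: law_sum_pos less_imp_le)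
  also have "\<dots> = sqrt (2\<^sup>2 * (stein_variance / (2 * total_mean)))"
    by (subst real_sqrt_mult) simp
  also have "2\<^sup>2 * (stein_variance / (2 * total_mean)) = 2 / total_mean * stein_variance"
    by (simp add: power2_eq_square)
  finally show ?thesis .
next
  case False
  then have "2 * total_mean \<le> stein_variance"
    using stein_variance_ge total_mean_pos by linarith
  then have "2\<^sup>2 \<le> 2 / total_mean * stein_variance"
    using total_mean_pos by (simp add: field_simps)
  then have "2 \<le> sqrt (2 / total_mean * stein_variance)"
    using real_le_rsqrt by blast
  moreover have "tv_nat law_sum (pmf (poisson_pmf total_mean)) \<le> 2"
    using law_sum_pos total_mean_pos
    by (intro tv_nat_le_2 law_sum_sums) (auto intro: less_imp_le poisson_sums)
  ultimately show ?thesis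
    by linarith
qed

lemma equal_rates:
  assumes c: "0 < c" and q: "\<And>i. i \<in> {1..n} \<Longrightarrow> q i = real n / (real n + c)"
  shows "total_mean = c" and "stein_variance = c ^ 3 / (real n * (real n + c))"
proof -
  have n: "0 < real n"
    using n_pos by simp
  have mean: "mean i = c / real n"
    and cube: "(1 - q i) ^ 3 / (q i)\<^sup>2 = c ^ 3 / (real n * (real n * (real n + c)))"
    if "i \<in> {1..n}" for i
  proof -
    have nc: "0 < real n + c"
      using n c by simp
    have one_minus: "1 - q i = c / (real n + c)"
      unfolding q[OF that] using nc by (simp add: field_simps)
    show "mean i = c / real n"
      unfolding mean_def one_minus unfolding q[OF that] using n c by (simp add: divide_divide_times_eq)
    show "(1 - q i) ^ 3 / (q i)\<^sup>2 = c ^ 3 / (real n * (real n * (real n + c)))"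
      unfolding one_minus unfolding q[OF that] using n c
      by (simp add: power_divide divide_divide_times_eq power2_eq_square power3_eq_cube)
  qed
  show "total_mean = c"
    unfolding total_mean_def using n by (simp add: mean)
  show "stein_variance = c ^ 3 / (real n * (real n + c))"
    unfolding stein_variance_def using n by (simp add: cube)
qed


lemma tv_law_sum_poisson_equal_rates_le:
  assumes c: "0 < c" and q: "\<And>i. i \<in> {1..n} \<Longrightarrow> q i = real n / (real n + c)"
  shows "tv_nat law_sum (pmf (poisson_pmf c)) \<le> sqrt 2 * c / sqrt (real n * (real n + c))"
proof -
  have "tv_nat law_sum (pmf (poisson_pmf c)) \<le> sqrt (2 / c * (c ^ 3 / (real n * (real n + c))))"
    using tv_law_sum_poisson_le by (simp only: equal_rates[OF c q])
  also have "2 / c * (c ^ 3 / (real n * (real n + c))) = c\<^sup>2 * 2 / (real n * (real n + c))"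
    using c by (simp add: power2_eq_square power3_eq_cube)
  also have "sqrt \<dots> = sqrt 2 * c / sqrt (real n * (real n + c))"
    using c by (simp add: real_sqrt_mult real_sqrt_divide)
  finally show ?thesis .
qed

end

theorem mainTheorem12:
  fixes M :: "'a measure" and X :: "nat \<Rightarrow> 'a \<Rightarrow> nat"
    and q :: "nat \<Rightarrow> real" and n :: nat
  assumes "prob_space M"
    and "n \<ge> 1"
    and q01: "\<forall>i\<in>{1..n}. 0 < q i \<and> q i < 1"
    and indep: "prob_space.indep_vars M (\<lambda>_. count_space UNIV) X {1..n}"
    and geom: "\<forall>i\<in>{1..n}. \<forall>x::nat.
                 measure M {\<omega> \<in> space M. X i \<omega> = x} = (1 - q i) ^ x * q i"
  defines "S \<equiv> (\<lambda>\<omega>. \<Sum>i\<in>{1..n}. X i \<omega>)"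
    and "lam \<equiv> (\<Sum>i\<in>{1..n}. (1 - q i) / q i)"
  shows "(\<forall>i\<in>{1..n}. scaled_fisher M (X i) = (1 - q i)\<^sup>2 / q i)
    \<and> tv_nat (\<lambda>k. measure M {\<omega> \<in> space M. S \<omega> = k}) (pmf (poisson_pmf lam))
        \<le> sqrt (2 / lam * (\<Sum>i\<in>{1..n}. (1 - q i) ^ 3 / (q i)\<^sup>2))
    \<and> (\<forall>c::real. c > 0 \<longrightarrow> (\<forall>i\<in>{1..n}. q i = real n / (real n + c)) \<longrightarrow>
         tv_nat (\<lambda>k. measure M {\<omega> \<in> space M. S \<omega> = k}) (pmf (poisson_pmf c))
           \<le> sqrt 2 * c / sqrt (real n * (real n + c))
         \<and> sqrt 2 * c / sqrt (real n * (real n + c)) \<le> sqrt 2 * (c / real n))"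
proof -
  interpret indep_geometric M X q n
    using assms(1,2) indep q01 geom
    by (intro indep_geometric.intro indep_geometric_axioms.intro) auto
  have law: "(\<lambda>k. measure M {\<omega> \<in> space M. S \<omega> = k}) = law_sum"
    by (simp add: fun_eq_iff S_def law_sum_def)
  have lam: "lam = total_mean"
    by (simp add: lam_def total_mean_def mean_def)
  have n: "0 < real n"
    using assms(2) by simp
  have equal_rates_case:
    "tv_nat law_sum (pmf (poisson_pmf c)) \<le> sqrt 2 * c / sqrt (real n * (real n + c))
      \<and> sqrt 2 * c / sqrt (real n * (real n + c)) \<le> sqrt 2 * (c / real n)"
    if c: "0 < c" and q: "\<forall>i\<in>{1..n}. q i = real n / (real n + c)" for c
  proof
    show "tv_nat law_sum (pmf (poisson_pmf c)) \<le> sqrt 2 * c / sqrt (real n * (real n + c))"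
      by (rule tv_law_sum_poisson_equal_rates_le[OF c]) (use q in auto)
    show "sqrt 2 * c / sqrt (real n * (real n + c)) \<le> sqrt 2 * (c / real n)"
      using c n by (intro mult_div_sqrt_mult_add_le) auto
  qed
  show ?thesis
    unfolding law lam stein_variance_def[symmetric]
    using scaled_fisher_X tv_law_sum_poisson_le equal_rates_case by simp
qed

end
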